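(* Let $f$ and $g$ be transcendental entire functions with $f\circ g=g\circ f$, let $h$ be a transcendental entire function and $P$ a polynomial of degree at least $2$ such that $P\circ f=h\circ g$. If $z_0\in F(f)\cap BU(f)$, then every $w\in\mathbb{C}$ with $g(w)=z_0$ satisfies $w\in F(f)\cap BU(f)$.
   Context: For an entire function $f$, $f^n$ denotes the $n$-th iterate. The Fatou set $F(f)$ is the set of points having a neighbourhood on which $\{f^n\}$ is normal, and $J(f)=\mathbb{C}\setminus F(f)$ is the Julia set. The escaping set is $I(f)=\{z: f^n(z)\to\infty\}$, $K(f)=\{z: \exists R>0,\ |f^n(z)|\le R\ \forall n\ge0\}$, and the Bungee set is $BU(f)=\mathbb{C}\setminus(I(f)\cup K(f))$. *)

theory Defs
  imports "HOL-Complex_Analysis.Complex_Analysis" "HOL-Computational_Algebra.Polynomial"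
begin

definition transcendental_entire :: "(complex \<Rightarrow> complex) \<Rightarrow> bool" where
  "transcendental_entire f \<longleftrightarrow> f holomorphic_on UNIV \<and> \<not> (\<exists>p. \<forall>z. f z = poly p z)"

definition normal_family_on :: "(nat \<Rightarrow> complex \<Rightarrow> complex) \<Rightarrow> complex set \<Rightarrow> bool" where
  "normal_family_on F U \<longleftrightarrow>
     (\<forall>k :: nat \<Rightarrow> nat. \<exists>r. strict_mono r \<and>
        ((\<exists>g. \<forall>K. compact K \<and> K \<subseteq> U \<longrightarrow>
                 uniform_limit K (\<lambda>n. F (k (r n))) g sequentially) \<or>
         (\<forall>K. compact K \<and> K \<subseteq> U \<longrightarrow>
                 (\<forall>M. \<forall>\<^sub>F n in sequentially. \<forall>z\<in>K. norm (F (k (r n)) z) > M))))"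

definition fatou_set :: "(complex \<Rightarrow> complex) \<Rightarrow> complex set" where
  "fatou_set f = {z. \<exists>U. open U \<and> z \<in> U \<and> normal_family_on (\<lambda>n. f ^^ n) U}"

definition julia_set :: "(complex \<Rightarrow> complex) \<Rightarrow> complex set" where
  "julia_set f = UNIV - fatou_set f"

definition escaping_set :: "(complex \<Rightarrow> complex) \<Rightarrow> complex set" where
  "escaping_set f = {z. filterlim (\<lambda>n. (f ^^ n) z) at_infinity sequentially}"

definition bounded_orbit_set :: "(complex \<Rightarrow> complex) \<Rightarrow> complex set" where
  "bounded_orbit_set f = {z. \<exists>R>0. \<forall>n. norm ((f ^^ n) z) \<le> R}"

definition bungee_set :: "(complex \<Rightarrow> complex) \<Rightarrow> complex set" where
  "bungee_set f = UNIV - (escaping_set f \<union> bounded_orbit_set f)"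

end

theory Submission
  imports Defs
begin

text \<open>Since g commutes with f, it maps the f-orbit of w onto the f-orbit of z0 = g w.
  A bounded orbit of w therefore yields a bounded orbit of z0, and escape of w yields escape
  of z0 through P (f^(n+1) w) = h (f^n z0); so w lies in neither I(f) nor K(f).

  For the Fatou set, take a disc D about w that g maps into a neighbourhood V of z0 on which
  the iterates are normal. Along a subsequence f^n either tends to infinity locally uniformly
  on V, which pulls back along g to D, or converges there. In the latter case g \<circ> f^n is
  eventually bounded on D, so f^n omits a disc around a point where |g| is large; Montel's
  theorem for 1/(f^n - c), together with Hurwitz's theorem to tell apart the limits
  0 and nonzero, then yields a subsequence converging or diverging locally uniformly on D.\<close>

definition locally_uniformly_convergent_on ::
    "complex set \<Rightarrow> (nat \<Rightarrow> complex \<Rightarrow> complex) \<Rightarrow> bool" where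
  "locally_uniformly_convergent_on S F \<longleftrightarrow>
     (\<exists>g. \<forall>K. compact K \<and> K \<subseteq> S \<longrightarrow> uniform_limit K F g sequentially)"

definition locally_uniformly_divergent_on ::
    "complex set \<Rightarrow> (nat \<Rightarrow> complex \<Rightarrow> complex) \<Rightarrow> bool" where
  "locally_uniformly_divergent_on S F \<longleftrightarrow>
     (\<forall>K. compact K \<and> K \<subseteq> S \<longrightarrow> (\<forall>M. \<forall>\<^sub>F n in sequentially. \<forall>z\<in>K. norm (F n z) > M))"

lemma normal_family_on_iff:
  "normal_family_on F U \<longleftrightarrow>
     (\<forall>k :: nat \<Rightarrow> nat. \<exists>r. strict_mono r \<and>
        (locally_uniformly_convergent_on U (\<lambda>n. F (k (r n))) \<or>
         locally_uniformly_divergent_on U (\<lambda>n. F (k (r n)))))"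
  unfolding normal_family_on_def locally_uniformly_convergent_on_def
    locally_uniformly_divergent_on_def ..

lemma transcendental_entire_unbounded:
  assumes "transcendental_entire g"
  shows "\<not> bounded (range g)"
proof
  assume "bounded (range g)"
  moreover have "g holomorphic_on UNIV"
    using assms by (simp add: transcendental_entire_def)
  ultimately obtain c where "\<And>z. g z = c"
    using Liouville_theorem by (metis constant_on_def iso_tuple_UNIV_I)
  then have "\<forall>z. g z = poly [:c:] z" by simp
  then show False
    using assms unfolding transcendental_entire_def by blast
qed

lemma continuous_on_bounded_image:
  fixes g :: "'a::heine_borel \<Rightarrow> 'b::metric_space"
  assumes "continuous_on UNIV g" and "bounded A"
  shows "bounded (g ` A)"
proof -
  have "compact (g ` closure A)"
    using assms by (intro compact_continuous_image continuous_on_subset[OF assms(1)]) auto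
  then show ?thesis
    by (meson bounded_subset closure_subset compact_imp_bounded image_mono)
qed

lemma holomorphic_on_funpow:
  assumes "f holomorphic_on UNIV"
  shows "(f ^^ n) holomorphic_on UNIV"
proof (induction n)
  case 0
  then show ?case by (simp add: id_def)
next
  case (Suc n)
  have "(f \<circ> (f ^^ n)) holomorphic_on UNIV"
    by (rule holomorphic_on_compose_gen[OF Suc assms]) auto
  then show ?case by (simp add: o_def)
qed

lemma funpow_commute_apply:
  assumes "f \<circ> g = g \<circ> f"
  shows "g ((f ^^ n) z) = (f ^^ n) (g z)"
  by (induction n) (simp_all, metis assms comp_apply)

lemma compact_norm_bounded_below:
  fixes \<phi> :: "'a::metric_space \<Rightarrow> 'b::real_normed_vector"
  assumes "compact K" and "continuous_on K \<phi>" and "\<And>z. z \<in> K \<Longrightarrow> \<phi> z \<noteq> 0"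
  obtains b where "b > 0" and "\<And>z. z \<in> K \<Longrightarrow> b \<le> norm (\<phi> z)"
proof (cases "K = {}")
  case True
  then show ?thesis using that[of 1] by simp
next
  case False
  have "continuous_on K (\<lambda>z. norm (\<phi> z))"
    using assms(2) by (intro continuous_intros)
  then obtain z1 where "z1 \<in> K" and "\<And>z. z \<in> K \<Longrightarrow> norm (\<phi> z1) \<le> norm (\<phi> z)"
    using continuous_attains_inf[OF assms(1) False] by blast
  then show ?thesis
    using that[of "norm (\<phi> z1)"] assms(3) by auto
qed

lemma locally_uniformly_divergent_of_inverse_to_zero:
  assumes ul: "\<And>K. compact K \<Longrightarrow> K \<subseteq> S \<Longrightarrow>
                 uniform_limit K (\<lambda>n z. inverse (F n z - c)) (\<lambda>_. 0) sequentially"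
    and omit: "\<And>n z. z \<in> S \<Longrightarrow> F n z \<noteq> c"
  shows "locally_uniformly_divergent_on S F"
  unfolding locally_uniformly_divergent_on_def
proof (intro allI impI)
  fix K M assume K: "compact K \<and> K \<subseteq> S"
  define A where "A = \<bar>M\<bar> + norm c + 1"
  have "A > 0" by (simp add: A_def add_nonneg_pos)
  then have "\<forall>\<^sub>F n in sequentially. \<forall>z\<in>K. norm (inverse (F n z - c)) < inverse A"
    using uniform_limitD[OF ul] K by (simp add: dist_norm)
  then show "\<forall>\<^sub>F n in sequentially. \<forall>z\<in>K. norm (F n z) > M"
  proof (rule eventually_mono, intro ballI)
    fix n z assume "\<forall>z\<in>K. norm (inverse (F n z - c)) < inverse A" and "z \<in> K"
    then have "inverse (norm (F n z - c)) < inverse A"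
      by (simp add: norm_inverse)
    moreover have "norm (F n z - c) > 0"
      using omit K \<open>z \<in> K\<close> by auto
    ultimately have "A < norm (F n z - c)"
      using \<open>A > 0\<close> inverse_less_iff_less by blast
    moreover have "norm (F n z - c) \<le> norm (F n z) + norm c"
      by (rule norm_triangle_ineq4)
    ultimately show "norm (F n z) > M"
      by (simp add: A_def)
  qed
qed

lemma locally_uniformly_convergent_of_inverse_limit:
  assumes ul: "\<And>K. compact K \<Longrightarrow> K \<subseteq> S \<Longrightarrow>
                 uniform_limit K (\<lambda>n z. inverse (F n z - c)) \<phi> sequentially"
    and cont: "continuous_on S \<phi>" and nz: "\<And>z. z \<in> S \<Longrightarrow> \<phi> z \<noteq> 0"
    and omit: "\<And>n z. z \<in> S \<Longrightarrow> F n z \<noteq> c"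
  shows "locally_uniformly_convergent_on S F"
  unfolding locally_uniformly_convergent_on_def
proof (intro exI allI impI)
  fix K assume K: "compact K \<and> K \<subseteq> S"
  obtain b where "b > 0" and b: "\<And>z. z \<in> K \<Longrightarrow> b \<le> norm (\<phi> z)"
    using compact_norm_bounded_below[of K \<phi>] K nz continuous_on_subset[OF cont] by blast
  have "uniform_limit K (\<lambda>n z. c + inverse (inverse (F n z - c))) (\<lambda>z. c + (inverse \<circ> \<phi>) z) sequentially"
    by (intro uniform_limit_add uniform_limit_const uniform_lim_inverse[OF ul b \<open>b > 0\<close>])
      (use K in auto)
  moreover have "(\<lambda>n z. c + inverse (inverse (F n z - c))) = F"
    by (simp add: fun_eq_iff)
  ultimately show "uniform_limit K F (\<lambda>z. c + inverse (\<phi> z)) sequentially"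
    by simp
qed

lemma normal_subsequence_omitting_ball:
  fixes F :: "nat \<Rightarrow> complex \<Rightarrow> complex"
  assumes S: "open S" "connected S"
    and hol: "\<And>n. F n holomorphic_on S"
    and "\<rho> > 0" and omit: "\<And>n z. z \<in> S \<Longrightarrow> \<rho> \<le> dist (F n z) c"
  obtains r where "strict_mono r"
    and "locally_uniformly_convergent_on S (\<lambda>n. F (r n)) \<or>
         locally_uniformly_divergent_on S (\<lambda>n. F (r n))"
proof -
  define H where "H = (\<lambda>n z. inverse (F n z - c))"
  have ne: "F n z \<noteq> c" if "z \<in> S" for n z
    using omit[OF that, of n] \<open>\<rho> > 0\<close> by auto
  have H_hol: "H n holomorphic_on S" for n
    unfolding H_def using ne by (intro holomorphic_intros hol) auto
  have H_bound: "norm (H n z) \<le> inverse \<rho>" if "z \<in> S" for n z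
    using omit[OF that, of n] \<open>\<rho> > 0\<close>
    by (simp add: H_def norm_inverse dist_norm le_imp_inverse_le)
  obtain \<phi> r where \<phi>_hol: "\<phi> holomorphic_on S" and r: "strict_mono r"
    and ul: "\<And>K. compact K \<Longrightarrow> K \<subseteq> S \<Longrightarrow> uniform_limit K (H \<circ> r) \<phi> sequentially"
    by (rule Montel[OF S(1), of "{h. h holomorphic_on S \<and> (\<forall>z\<in>S. norm (h z) \<le> inverse \<rho>)}" H])
      (use H_hol H_bound in blast)+
  have ul': "uniform_limit K (\<lambda>n z. inverse (F (r n) z - c)) \<phi> sequentially"
    if "compact K" "K \<subseteq> S" for K
    using ul[OF that] by (simp add: H_def o_def)
  show ?thesis
  proof (cases "\<exists>z\<in>S. \<phi> z = 0")
    case True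
    then obtain z0 where z0: "z0 \<in> S" "\<phi> z0 = 0" by blast
    have "\<phi> constant_on S"
      using Hurwitz_no_zeros[OF S, of "H \<circ> r" \<phi> z0] H_hol \<phi>_hol ul z0 ne
      by (auto simp: H_def)
    then have \<phi>_zero: "\<phi> z = 0" if "z \<in> S" for z
      using z0 that by (auto simp: constant_on_def)
    have "uniform_limit K (\<lambda>n z. inverse (F (r n) z - c)) (\<lambda>_. 0) sequentially"
      if "compact K" "K \<subseteq> S" for K
      using ul'[OF that] by (subst uniform_limit_cong'[where h = "\<lambda>_. 0" and i = \<phi>])
        (use \<phi>_zero that in auto)
    then have "locally_uniformly_divergent_on S (\<lambda>n. F (r n))"
      by (rule locally_uniformly_divergent_of_inverse_to_zero) (auto simp: ne)
    with r that show ?thesis by blast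
  next
    case False
    then have "locally_uniformly_convergent_on S (\<lambda>n. F (r n))"
      by (intro locally_uniformly_convergent_of_inverse_limit[OF ul']
          holomorphic_on_imp_continuous_on[OF \<phi>_hol] ne) auto
    with r that show ?thesis by blast
  qed
qed

lemma continuous_unbounded_large_on_ball:
  fixes g :: "'a::metric_space \<Rightarrow> 'b::real_normed_vector"
  assumes "continuous_on UNIV g" and "\<not> bounded (range g)"
  obtains c \<rho> where "\<rho> > 0" and "\<And>x. dist x c < \<rho> \<Longrightarrow> B < norm (g x)"
proof -
  have "\<not> (\<forall>x\<in>range g. norm x \<le> B + 1)"
    using assms(2) unfolding bounded_iff by blast
  then obtain c where c: "B + 1 < norm (g c)"
    by (auto simp: not_le)
  have "isCont g c"
    using assms(1) by (simp add: continuous_on_eq_continuous_at)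
  then obtain \<rho> where "\<rho> > 0" and \<rho>: "\<And>x. dist x c < \<rho> \<Longrightarrow> dist (g x) (g c) < 1"
    unfolding continuous_at_eps_delta by (meson zero_less_one)
  have "B < norm (g x)" if "dist x c < \<rho>" for x
    using \<rho>[OF that] c norm_triangle_ineq3[of "g x" "g c"] by (simp add: dist_norm)
  with \<open>\<rho> > 0\<close> that show ?thesis by blast
qed

lemma uniform_limit_eventually_bounded:
  assumes "compact K" and cont: "\<And>n. continuous_on K (F n)"
    and ul: "uniform_limit K F \<psi> sequentially"
  obtains N B where "\<And>n z. N \<le> n \<Longrightarrow> z \<in> K \<Longrightarrow> norm (F n z) \<le> B"
proof -
  have "continuous_on K \<psi>"
    by (rule uniform_limit_theorem[OF _ ul]) (simp_all add: cont)
  then obtain B where B: "\<And>z. z \<in> K \<Longrightarrow> norm (\<psi> z) \<le> B"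
    using compact_continuous_image[OF _ \<open>compact K\<close>] compact_imp_bounded
    by (metis bounded_iff image_eqI)
  obtain N where N: "\<And>n z. N \<le> n \<Longrightarrow> z \<in> K \<Longrightarrow> dist (F n z) (\<psi> z) < 1"
    using uniform_limitD[OF ul zero_less_one] unfolding eventually_sequentially by blast
  have "norm (F n z) \<le> B + 1" if "N \<le> n" "z \<in> K" for n z
    using N[OF that] B[OF that(2)] norm_triangle_ineq2[of "F n z" "\<psi> z"]
    by (simp add: dist_norm)
  with that show ?thesis by blast
qed

lemma locally_uniformly_divergent_on_pullback:
  fixes g :: "complex \<Rightarrow> complex"
  assumes g: "continuous_on UNIV g" and "g ` S \<subseteq> V"
    and div: "locally_uniformly_divergent_on V F"
    and semiconj: "\<And>n z. z \<in> S \<Longrightarrow> g (G n z) = F n (g z)"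
  shows "locally_uniformly_divergent_on S G"
  unfolding locally_uniformly_divergent_on_def
proof (intro allI impI)
  fix K M assume K: "compact K \<and> K \<subseteq> S"
  obtain C where C: "\<And>x. norm x \<le> \<bar>M\<bar> \<Longrightarrow> norm (g x) \<le> C"
    using continuous_on_bounded_image[OF g bounded_cball, of 0 "\<bar>M\<bar>"]
    unfolding bounded_iff by (metis image_eqI mem_cball_0)
  have "compact (g ` K)" and "g ` K \<subseteq> V"
    using K \<open>g ` S \<subseteq> V\<close> continuous_on_subset[OF g] by (auto intro: compact_continuous_image)
  then have "\<forall>\<^sub>F n in sequentially. \<forall>y\<in>g ` K. C < norm (F n y)"
    using div unfolding locally_uniformly_divergent_on_def by blast
  then show "\<forall>\<^sub>F n in sequentially. \<forall>z\<in>K. M < norm (G n z)"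
  proof (rule eventually_mono, intro ballI)
    fix n z assume "\<forall>y\<in>g ` K. C < norm (F n y)" and "z \<in> K"
    then have "C < norm (g (G n z))"
      using semiconj K by auto
    then have "\<bar>M\<bar> < norm (G n z)"
      using C[of "G n z"] by linarith
    then show "M < norm (G n z)"
      by linarith
  qed
qed

lemma normal_subsequence_pullback_of_convergent:
  fixes g :: "complex \<Rightarrow> complex" and F G :: "nat \<Rightarrow> complex \<Rightarrow> complex"
  assumes S: "open S" "connected S" and "compact K0" "S \<subseteq> K0" "g ` K0 \<subseteq> V"
    and g: "continuous_on UNIV g" "\<not> bounded (range g)"
    and G_hol: "\<And>n. G n holomorphic_on S" and F_cont: "\<And>n. continuous_on (g ` K0) (F n)"
    and conv: "locally_uniformly_convergent_on V F"
    and semiconj: "\<And>n z. z \<in> S \<Longrightarrow> g (G n z) = F n (g z)"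
  obtains r where "strict_mono r"
    and "locally_uniformly_convergent_on S (\<lambda>n. G (r n)) \<or>
         locally_uniformly_divergent_on S (\<lambda>n. G (r n))"
proof -
  have "compact (g ` K0)"
    using \<open>compact K0\<close> continuous_on_subset[OF g(1)] by (auto intro: compact_continuous_image)
  then obtain \<psi> where "uniform_limit (g ` K0) F \<psi> sequentially"
    using conv \<open>g ` K0 \<subseteq> V\<close> unfolding locally_uniformly_convergent_on_def by blast
  then obtain N B where B: "\<And>n z. N \<le> n \<Longrightarrow> z \<in> g ` K0 \<Longrightarrow> norm (F n z) \<le> B"
    using uniform_limit_eventually_bounded[where F = F, OF \<open>compact (g ` K0)\<close> F_cont] by blast
  obtain c \<rho> where "\<rho> > 0" and \<rho>: "\<And>x. dist x c < \<rho> \<Longrightarrow> B < norm (g x)"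
    using continuous_unbounded_large_on_ball[OF g] by blast
  \<comment> \<open>From index N on, g \<circ> G n is bounded by B on S, so G n omits the ball where |g| > B.\<close>
  have omit: "\<rho> \<le> dist (G (m + N) z) c" if "z \<in> S" for m z
  proof (rule ccontr)
    assume "\<not> \<rho> \<le> dist (G (m + N) z) c"
    then have "B < norm (g (G (m + N) z))"
      using \<rho> by simp
    moreover have "norm (g (G (m + N) z)) \<le> B"
      using B[of "m + N" "g z"] semiconj that \<open>S \<subseteq> K0\<close> by auto
    ultimately show False by simp
  qed
  obtain r where r: "strict_mono r"
    and alt: "locally_uniformly_convergent_on S (\<lambda>n. G (r n + N)) \<or>
              locally_uniformly_divergent_on S (\<lambda>n. G (r n + N))"
    using normal_subsequence_omitting_ball[where F = "\<lambda>m. G (m + N)", OF S G_hol \<open>\<rho> > 0\<close> omit]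
    by blast
  have "strict_mono (\<lambda>n. r n + N)"
    using r by (simp add: strict_mono_def)
  with alt that show ?thesis by blast
qed

lemma fatou_set_preimage_of_commuting:
  fixes f g :: "complex \<Rightarrow> complex"
  assumes f: "f holomorphic_on UNIV" and g: "continuous_on UNIV g" "\<not> bounded (range g)"
    and comm: "f \<circ> g = g \<circ> f" and "g w \<in> fatou_set f"
  shows "w \<in> fatou_set f"
proof -
  obtain V where "open V" "g w \<in> V" and normal: "normal_family_on (\<lambda>n. f ^^ n) V"
    using \<open>g w \<in> fatou_set f\<close> by (auto simp: fatou_set_def)
  then have "open (g -` V)" "w \<in> g -` V"
    using g(1) by (auto intro: open_vimage)
  then obtain \<epsilon> where "\<epsilon> > 0" and "ball w \<epsilon> \<subseteq> g -` V"
    using openE by blast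
  define S where "S = ball w (\<epsilon> / 2)"
  define K0 where "K0 = cball w (\<epsilon> / 2)"
  have "open S" "connected S" "w \<in> S" "compact K0"
    using \<open>\<epsilon> > 0\<close> by (auto simp: S_def K0_def)
  have "K0 \<subseteq> ball w \<epsilon>"
    using \<open>\<epsilon> > 0\<close> by (simp add: K0_def cball_subset_ball_iff)
  then have "S \<subseteq> K0" and "g ` K0 \<subseteq> V"
    using \<open>ball w \<epsilon> \<subseteq> g -` V\<close> by (auto simp: S_def K0_def)
  have semiconj: "g ((f ^^ n) z) = (f ^^ n) (g z)" for n z
    using comm by (rule funpow_commute_apply)
  have iter_hol: "(f ^^ n) holomorphic_on A" for n A
    using holomorphic_on_funpow[OF f] holomorphic_on_subset by blast
  then have iter_cont: "continuous_on A (f ^^ n)" for n A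
    by (rule holomorphic_on_imp_continuous_on)
  have "normal_family_on (\<lambda>n. f ^^ n) S"
    unfolding normal_family_on_iff
  proof
    fix k :: "nat \<Rightarrow> nat"
    obtain r where r: "strict_mono r"
      and alt: "locally_uniformly_convergent_on V (\<lambda>n. f ^^ k (r n)) \<or>
                locally_uniformly_divergent_on V (\<lambda>n. f ^^ k (r n))"
      using normal unfolding normal_family_on_iff by blast
    then show "\<exists>r. strict_mono r \<and>
                 (locally_uniformly_convergent_on S (\<lambda>n. f ^^ k (r n)) \<or>
                  locally_uniformly_divergent_on S (\<lambda>n. f ^^ k (r n)))"
    proof (elim disjE)
      assume div: "locally_uniformly_divergent_on V (\<lambda>n. f ^^ k (r n))"
      have "g ` S \<subseteq> V"
        using \<open>S \<subseteq> K0\<close> \<open>g ` K0 \<subseteq> V\<close> by blast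
      then have "locally_uniformly_divergent_on S (\<lambda>n. f ^^ k (r n))"
        by (rule locally_uniformly_divergent_on_pullback
            [where F = "\<lambda>n. f ^^ k (r n)" and G = "\<lambda>n. f ^^ k (r n)", OF g(1) _ div semiconj])
      with r show ?thesis by blast
    next
      assume conv: "locally_uniformly_convergent_on V (\<lambda>n. f ^^ k (r n))"
      obtain r' where "strict_mono r'"
        and "locally_uniformly_convergent_on S (\<lambda>n. f ^^ k (r (r' n))) \<or>
             locally_uniformly_divergent_on S (\<lambda>n. f ^^ k (r (r' n)))"
        using normal_subsequence_pullback_of_convergent
            [where F = "\<lambda>n. f ^^ k (r n)" and G = "\<lambda>n. f ^^ k (r n)",
             OF \<open>open S\<close> \<open>connected S\<close> \<open>compact K0\<close> \<open>S \<subseteq> K0\<close> \<open>g ` K0 \<subseteq> V\<close> g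
                iter_hol iter_cont conv semiconj]
        by blast
      with r show ?thesis
        by (intro exI[of _ "r \<circ> r'"]) (simp add: strict_mono_o)
    qed
  qed
  with \<open>open S\<close> \<open>w \<in> S\<close> show ?thesis
    unfolding fatou_set_def by blast
qed

lemma bounded_orbit_set_iff:
  "z \<in> bounded_orbit_set f \<longleftrightarrow> bounded (range (\<lambda>n. (f ^^ n) z))"
  unfolding bounded_orbit_set_def bounded_pos by auto

lemma bounded_orbit_set_image_of_commuting:
  fixes f g :: "complex \<Rightarrow> complex"
  assumes "continuous_on UNIV g" and "f \<circ> g = g \<circ> f" and "w \<in> bounded_orbit_set f"
  shows "g w \<in> bounded_orbit_set f"
proof -
  have "range (\<lambda>n. (f ^^ n) (g w)) = g ` range (\<lambda>n. (f ^^ n) w)"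
    using funpow_commute_apply[OF assms(2)] by (auto simp: image_image)
  then show ?thesis
    using assms(1,3) continuous_on_bounded_image by (simp add: bounded_orbit_set_iff)
qed

lemma filterlim_at_infinity_of_continuous_comp:
  fixes h :: "'a::{heine_borel,real_normed_vector} \<Rightarrow> 'b::real_normed_vector" and u :: "'c \<Rightarrow> 'a"
  assumes "continuous_on UNIV h" and lim: "filterlim (\<lambda>x. h (u x)) at_infinity F"
  shows "filterlim u at_infinity F"
  unfolding filterlim_at_infinity[OF order_refl]
proof (intro allI impI)
  fix r :: real assume "r > 0"
  obtain C where "C > 0" and C: "\<And>y. y \<in> cball 0 r \<Longrightarrow> norm (h y) < C"
    using continuous_on_bounded_image[OF assms(1) bounded_cball, of 0 r]
    unfolding bounded_pos by (meson gt_ex image_eqI le_less_trans less_trans)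
  have "\<forall>\<^sub>F x in F. C \<le> norm (h (u x))"
    using lim \<open>C > 0\<close> unfolding filterlim_at_infinity[OF order_refl] by blast
  then show "\<forall>\<^sub>F x in F. r \<le> norm (u x)"
  proof (rule eventually_mono)
    fix x assume "C \<le> norm (h (u x))"
    then have "u x \<notin> cball 0 r"
      using C by force
    then show "r \<le> norm (u x)"
      by simp
  qed
qed

lemma escaping_set_image_of_semiconj:
  fixes f g h :: "complex \<Rightarrow> complex" and P :: "complex poly"
  assumes "degree P > 0" and "continuous_on UNIV h"
    and comm: "f \<circ> g = g \<circ> f" and semiconj: "(\<lambda>z. poly P (f z)) = h \<circ> g"
    and "w \<in> escaping_set f"
  shows "g w \<in> escaping_set f"
proof -
  have "filterlim (\<lambda>n. (f ^^ n) w) at_infinity sequentially"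
    using \<open>w \<in> escaping_set f\<close> by (simp add: escaping_set_def)
  then have "filterlim (\<lambda>n. (f ^^ Suc n) w) at_infinity sequentially"
    by (rule filterlim_sequentially_Suc[of "\<lambda>n. (f ^^ n) w", THEN iffD2])
  then have "filterlim (\<lambda>n. poly P ((f ^^ Suc n) w)) at_infinity sequentially"
    by (rule filterlim_compose[OF filterlim_poly_at_infinity[OF \<open>degree P > 0\<close>]])
  moreover have "poly P ((f ^^ Suc n) w) = h ((f ^^ n) (g w))" for n
    using fun_cong[OF semiconj, of "(f ^^ n) w"] funpow_commute_apply[OF comm] by simp
  ultimately have "filterlim (\<lambda>n. h ((f ^^ n) (g w))) at_infinity sequentially"
    by simp
  then show ?thesis
    unfolding escaping_set_def
    by (auto intro: filterlim_at_infinity_of_continuous_comp[OF \<open>continuous_on UNIV h\<close>])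
qed

theorem theorem7:
  fixes f g h :: "complex \<Rightarrow> complex" and P :: "complex poly" and z0 w :: complex
  assumes "transcendental_entire f" and "transcendental_entire g"
    and "f \<circ> g = g \<circ> f"
    and "transcendental_entire h"
    and "degree P \<ge> 2"
    and "(\<lambda>z. poly P (f z)) = h \<circ> g"
    and "z0 \<in> fatou_set f \<inter> bungee_set f"
    and "g w = z0"
  shows "w \<in> fatou_set f \<inter> bungee_set f"
proof -
  have "f holomorphic_on UNIV" and "continuous_on UNIV g" and "continuous_on UNIV h"
    using assms(1,2,4) by (auto simp: transcendental_entire_def holomorphic_on_imp_continuous_on)
  have "w \<in> fatou_set f"
    using fatou_set_preimage_of_commuting[OF \<open>f holomorphic_on UNIV\<close> \<open>continuous_on UNIV g\<close>
        transcendental_entire_unbounded[OF assms(2)] assms(3)] assms(7,8) by blast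
  moreover have "w \<notin> bounded_orbit_set f"
    using bounded_orbit_set_image_of_commuting[OF \<open>continuous_on UNIV g\<close> assms(3)] assms(7,8)
    by (auto simp: bungee_set_def)
  moreover have "w \<notin> escaping_set f"
    using escaping_set_image_of_semiconj[OF _ \<open>continuous_on UNIV h\<close> assms(3,6)] assms(5,7,8)
    by (auto simp: bungee_set_def)
  ultimately show ?thesis
    by (simp add: bungee_set_def)
qed

end
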